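(* Let $D$ be a dataset, $\Omega=\{\omega_1,\dots,\omega_k\}$ a finite set of outcomes, $q$ a real-valued quality function with sensitivity $\Delta>0$, and $\varepsilon>0$; let $q_*=\max_i q(D,\omega_i)$. Then the output distributions of Intermediate Algorithm B and of Report Noisy Max with Exponential Noise (both defined below) on these inputs are the same.
   Context: $\mathrm{Expo}(\lambda)$ denotes the exponential distribution with rate $\lambda$, density $\lambda e^{-\lambda x}\mathbf{1}[x\ge0]$. Intermediate Algorithm B: compute $q_*$; for each $i=1,\dots,k$ independently set $v_i^\top=\min\{q_*,\,q(D,\omega_i)+X_i\}$ with $X_i\sim\mathrm{Expo}(\varepsilon/(2\Delta))$ and draw $z_i\sim\mathrm{Expo}(\varepsilon/(2\Delta))$ (all these random variables independent); let $S'=\{i: v_i^\top=q_*\}$; return $\arg\max_{i\in S'}(v_i^\top+z_i)$ (ties occur with probability zero). Report Noisy Max with Exponential Noise: for each $i=1,\dots,k$ independently set $v_i=q(D,\omega_i)+Y_i$ with $Y_i\sim\mathrm{Expo}(\varepsilon/(2\Delta))$; return $\arg\max_i v_i$ (ties occur with probability zero). *)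

theory Defs
  imports "HOL-Probability.Probability"
begin

text \<open>Outcomes are indexed by 0..k-1 (the paper's 1..k). Exp(l) on the reals.\<close>
definition expo :: "real \<Rightarrow> real measure" where
  "expo l = density lborel (exponential_density l)"

definition expo_vec :: "nat \<Rightarrow> real \<Rightarrow> (nat \<Rightarrow> real) measure" where
  "expo_vec k l = (\<Pi>\<^sub>M i\<in>{..<k}. expo l)"

text \<open>Argmax over a finite index set; ties (a probability-zero event) broken by least index.\<close>
definition argmax_idx :: "(nat \<Rightarrow> real) \<Rightarrow> nat set \<Rightarrow> nat" where
  "argmax_idx v S = (LEAST i. i \<in> S \<and> (\<forall>j\<in>S. v j \<le> v i))"

definition q_star :: "('d \<Rightarrow> 'o \<Rightarrow> real) \<Rightarrow> 'd \<Rightarrow> (nat \<Rightarrow> 'o) \<Rightarrow> nat \<Rightarrow> real" where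
  "q_star q D \<omega> k = Max ((\<lambda>i. q D (\<omega> i)) ` {..<k})"

definition rnm_out :: "('d \<Rightarrow> 'o \<Rightarrow> real) \<Rightarrow> 'd \<Rightarrow> (nat \<Rightarrow> 'o) \<Rightarrow> nat \<Rightarrow> (nat \<Rightarrow> real) \<Rightarrow> 'o" where
  "rnm_out q D \<omega> k Y = \<omega> (argmax_idx (\<lambda>i. q D (\<omega> i) + Y i) {..<k})"

definition algB_out :: "('d \<Rightarrow> 'o \<Rightarrow> real) \<Rightarrow> 'd \<Rightarrow> (nat \<Rightarrow> 'o) \<Rightarrow> nat \<Rightarrow> (nat \<Rightarrow> real) \<times> (nat \<Rightarrow> real) \<Rightarrow> 'o" where
  "algB_out q D \<omega> k Xz =
     (let qs = q_star q D \<omega> k;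
          v = (\<lambda>i. min qs (q D (\<omega> i) + fst Xz i));
          S' = {i \<in> {..<k}. v i = qs}
      in \<omega> (argmax_idx (\<lambda>i. v i + snd Xz i) S'))"

definition report_noisy_max_expo ::
  "('d \<Rightarrow> 'o \<Rightarrow> real) \<Rightarrow> 'd \<Rightarrow> (nat \<Rightarrow> 'o) \<Rightarrow> nat \<Rightarrow> real \<Rightarrow> real \<Rightarrow> 'o measure" where
  "report_noisy_max_expo q D \<omega> k \<epsilon> \<Delta> =
     distr (expo_vec k (\<epsilon> / (2 * \<Delta>))) (count_space UNIV) (rnm_out q D \<omega> k)"

definition intermediate_B ::
  "('d \<Rightarrow> 'o \<Rightarrow> real) \<Rightarrow> 'd \<Rightarrow> (nat \<Rightarrow> 'o) \<Rightarrow> nat \<Rightarrow> real \<Rightarrow> real \<Rightarrow> 'o measure" where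
  "intermediate_B q D \<omega> k \<epsilon> \<Delta> =
     distr (expo_vec k (\<epsilon> / (2 * \<Delta>)) \<Otimes>\<^sub>M expo_vec k (\<epsilon> / (2 * \<Delta>)))
           (count_space UNIV) (algB_out q D \<omega> k)"

end

theory Submission
  imports Defs
begin

text \<open>
  Coupling. Put \<open>c\<^sub>i = q\<^sub>* - q(D,\<omega>\<^sub>i) \<ge> 0\<close> and let \<open>Y\<^sub>i = c\<^sub>i + z\<^sub>i\<close> if \<open>X\<^sub>i \<ge> c\<^sub>i\<close> and
  \<open>Y\<^sub>i = X\<^sub>i\<close> otherwise. By memorylessness each \<open>Y\<^sub>i\<close> is again exponential with the same
  rate, and the \<open>Y\<^sub>i\<close> are independent, so Report Noisy Max run on \<open>Y\<close> has the law of
  Report Noisy Max. For nonnegative noise (almost surely) its scores are \<open>q\<^sub>* + z\<^sub>i\<close> on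
  \<open>S'\<close>, exactly Algorithm B's scores, and \<open>q(D,\<omega>\<^sub>i) + X\<^sub>i < q\<^sub>*\<close> off \<open>S'\<close>; as \<open>S'\<close>
  contains a maximiser of \<open>q\<close>, both algorithms pick the same index.
\<close>

lemma measurable_PiM_pair_componentwise:
  assumes [measurable]: "\<And>i. i \<in> I \<Longrightarrow> f i \<in> measurable (M i \<Otimes>\<^sub>M N i) (K i)"
  shows "(\<lambda>(x, z). \<lambda>i\<in>I. f i (x i, z i)) \<in> measurable (Pi\<^sub>M I M \<Otimes>\<^sub>M Pi\<^sub>M I N) (Pi\<^sub>M I K)"
  by measurable

lemma distr_PiM_pair_componentwise:
  fixes M :: "'i \<Rightarrow> 'a measure" and N :: "'i \<Rightarrow> 'b measure" and K :: "'i \<Rightarrow> 'c measure"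
  assumes "finite I"
    and M: "\<And>i. prob_space (M i)" and N: "\<And>i. prob_space (N i)"
    and f [measurable]: "\<And>i. f i \<in> measurable (M i \<Otimes>\<^sub>M N i) (K i)"
  shows "distr (Pi\<^sub>M I M \<Otimes>\<^sub>M Pi\<^sub>M I N) (Pi\<^sub>M I K) (\<lambda>(x, z). \<lambda>i\<in>I. f i (x i, z i))
       = (\<Pi>\<^sub>M i\<in>I. distr (M i \<Otimes>\<^sub>M N i) (K i) (f i))"
proof -
  interpret M: product_prob_space M using M by (rule product_prob_spaceI)
  interpret N: product_prob_space N using N by (rule product_prob_spaceI)
  interpret D: product_prob_space "\<lambda>i. distr (M i \<Otimes>\<^sub>M N i) (K i) (f i)"
    by (intro product_prob_spaceI prob_space.prob_space_distr prob_space_pair M N f)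
  have N_sf: "sigma_finite_measure (N i)" for i
    using N by (rule prob_space_imp_sigma_finite)
  have PiN_sf: "sigma_finite_measure (Pi\<^sub>M I N)"
    using N by (intro prob_space_imp_sigma_finite prob_space_PiM)
  let ?F = "\<lambda>(x, z). \<lambda>i\<in>I. f i (x i, z i)"
  have F: "?F \<in> measurable (Pi\<^sub>M I M \<Otimes>\<^sub>M Pi\<^sub>M I N) (Pi\<^sub>M I K)"
    using f by (rule measurable_PiM_pair_componentwise)
  show ?thesis
  proof (rule D.PiM_eqI[OF \<open>finite I\<close>])
    fix A assume A: "\<And>i. i \<in> I \<Longrightarrow> A i \<in> sets (distr (M i \<Otimes>\<^sub>M N i) (K i) (f i))"
    then have [measurable]: "\<And>i. i \<in> I \<Longrightarrow> A i \<in> sets (K i)" by simp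
    define B where "B i = f i -` A i \<inter> space (M i \<Otimes>\<^sub>M N i)" for i
    have B [measurable]: "B i \<in> sets (M i \<Otimes>\<^sub>M N i)" if "i \<in> I" for i
      unfolding B_def using that by measurable
    have "Pi\<^sub>E I A \<in> sets (Pi\<^sub>M I K)"
      using \<open>finite I\<close> by (intro sets_PiM_I_finite) simp_all
    then have [measurable]: "?F -` Pi\<^sub>E I A \<inter> space (Pi\<^sub>M I M \<Otimes>\<^sub>M Pi\<^sub>M I N) \<in> sets (Pi\<^sub>M I M \<Otimes>\<^sub>M Pi\<^sub>M I N)"
      by (rule measurable_sets[OF F])
    have slice: "Pair x -` (?F -` Pi\<^sub>E I A \<inter> space (Pi\<^sub>M I M \<Otimes>\<^sub>M Pi\<^sub>M I N))
        = (\<Pi>\<^sub>E i\<in>I. Pair (x i) -` B i)" if "x \<in> space (Pi\<^sub>M I M)" for x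
      using that by (auto simp: B_def space_pair_measure space_PiM PiE_iff)
    have "emeasure (distr (Pi\<^sub>M I M \<Otimes>\<^sub>M Pi\<^sub>M I N) (Pi\<^sub>M I K) ?F) (Pi\<^sub>E I A)
        = (\<integral>\<^sup>+x. emeasure (Pi\<^sub>M I N) (Pair x -` (?F -` Pi\<^sub>E I A \<inter> space (Pi\<^sub>M I M \<Otimes>\<^sub>M Pi\<^sub>M I N))) \<partial>Pi\<^sub>M I M)"
      by (simp add: emeasure_distr \<open>finite I\<close> del: vimage_Int)
         (rule sigma_finite_measure.emeasure_pair_measure_alt[OF PiN_sf], simp)
    also have "\<dots> = (\<integral>\<^sup>+x. (\<Prod>i\<in>I. emeasure (N i) (Pair (x i) -` B i)) \<partial>Pi\<^sub>M I M)"
      by (intro nn_integral_cong) (simp add: slice N.emeasure_PiM sets_Pair1 B \<open>finite I\<close> del: vimage_Int)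
    also have "\<dots> = (\<Prod>i\<in>I. \<integral>\<^sup>+y. emeasure (N i) (Pair y -` B i) \<partial>M i)"
      by (rule M.product_nn_integral_prod[OF \<open>finite I\<close>])
         (rule sigma_finite_measure.measurable_emeasure_Pair[OF N_sf B])
    also have "\<dots> = (\<Prod>i\<in>I. emeasure (distr (M i \<Otimes>\<^sub>M N i) (K i) (f i)) (A i))"
    proof (intro prod.cong refl)
      fix i assume "i \<in> I"
      then show "(\<integral>\<^sup>+y. emeasure (N i) (Pair y -` B i) \<partial>M i) = emeasure (distr (M i \<Otimes>\<^sub>M N i) (K i) (f i)) (A i)"
        using sigma_finite_measure.emeasure_pair_measure_alt[OF N_sf B[OF \<open>i \<in> I\<close>]]
        by (simp add: emeasure_distr B_def)
    qed
    finally show "emeasure (distr (Pi\<^sub>M I M \<Otimes>\<^sub>M Pi\<^sub>M I N) (Pi\<^sub>M I K) ?F) (Pi\<^sub>E I A)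
        = (\<Prod>i\<in>I. emeasure (distr (M i \<Otimes>\<^sub>M N i) (K i) (f i)) (A i))" .
  qed (simp only: sets_distr, intro sets_PiM_cong refl, simp)
qed

lemma sets_expo [simp, measurable_cong]: "sets (expo l) = sets borel"
  unfolding expo_def by simp

lemma space_expo [simp]: "space (expo l) = UNIV"
  unfolding expo_def by simp

lemma prob_space_expo: "0 < l \<Longrightarrow> prob_space (expo l)"
  unfolding expo_def by (rule prob_space_exponential_density)

lemma emeasure_expo:
  "A \<in> sets borel \<Longrightarrow> emeasure (expo l) A = (\<integral>\<^sup>+x. ennreal (exponential_density l x) * indicator A x \<partial>lborel)"
  unfolding expo_def by (subst emeasure_density) auto

lemma nn_integral_exponential_density_shift:
  fixes l c :: real and h :: "real \<Rightarrow> ennreal"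
  assumes "0 \<le> c" and [measurable]: "h \<in> borel_measurable borel"
  shows "(\<integral>\<^sup>+x. ennreal (exponential_density l x) * indicator {c..} x * h x \<partial>lborel)
       = ennreal (exp (- c * l)) * (\<integral>\<^sup>+z. ennreal (exponential_density l z) * h (c + z) \<partial>lborel)"
proof -
  have density_shift: "ennreal (exponential_density l (c + z)) * indicator {c..} (c + z)
      = ennreal (exp (- c * l)) * ennreal (exponential_density l z)" for z
  proof (cases "z < 0")
    case False
    then have "exponential_density l (c + z) = exp (- c * l) * exponential_density l z"
      using \<open>0 \<le> c\<close> by (simp add: exponential_density_def algebra_simps exp_add[symmetric])
    then show ?thesis
      using False by (simp add: ennreal_mult')
  qed (simp add: exponential_density_def)
  have "(\<integral>\<^sup>+x. ennreal (exponential_density l x) * indicator {c..} x * h x \<partial>lborel)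
      = (\<integral>\<^sup>+z. ennreal (exponential_density l (c + z)) * indicator {c..} (c + z) * h (c + z) \<partial>lborel)"
    by (subst nn_integral_real_affine[of _ 1 c]) simp_all
  also have "\<dots> = (\<integral>\<^sup>+z. ennreal (exp (- c * l)) * (ennreal (exponential_density l z) * h (c + z)) \<partial>lborel)"
    by (simp add: density_shift mult.assoc)
  also have "\<dots> = ennreal (exp (- c * l)) * (\<integral>\<^sup>+z. ennreal (exponential_density l z) * h (c + z) \<partial>lborel)"
    by (rule nn_integral_cmult) simp
  finally show ?thesis .
qed

lemma nn_integral_expo_memoryless:
  fixes l c :: real
  assumes "0 < l" and "0 \<le> c" and [measurable]: "A \<in> sets borel"
  shows "(\<integral>\<^sup>+x. (if c \<le> x then emeasure (expo l) {z. c + z \<in> A} else indicator A x) \<partial>expo l)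
       = emeasure (expo l) A"
proof -
  let ?ed = "\<lambda>x. ennreal (exponential_density l x)"
  define F where "F = emeasure (expo l) {z. c + z \<in> A}"
  have "(\<integral>\<^sup>+x. ?ed x \<partial>lborel) = 1"
    using prob_space.emeasure_space_1[OF prob_space_expo[OF \<open>0 < l\<close>]] by (simp add: emeasure_expo)
  then have tail: "(\<integral>\<^sup>+x. ?ed x * indicator {c..} x \<partial>lborel) = exp (- c * l)"
    using nn_integral_exponential_density_shift[OF \<open>0 \<le> c\<close>, of "\<lambda>_. 1"] by simp
  have "F = (\<integral>\<^sup>+z. ?ed z * indicator A (c + z) \<partial>lborel)"
    unfolding F_def by (subst emeasure_expo) (auto simp: indicator_def)
  then have tail_A: "(\<integral>\<^sup>+x. ?ed x * indicator {c..} x * indicator A x \<partial>lborel) = exp (- c * l) * F"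
    using nn_integral_exponential_density_shift[OF \<open>0 \<le> c\<close>, of "indicator A"] by simp
  have "(\<integral>\<^sup>+x. (if c \<le> x then F else indicator A x) \<partial>expo l)
      = (\<integral>\<^sup>+x. ?ed x * indicator {..<c} x * indicator A x + ?ed x * indicator {c..} x * F \<partial>lborel)"
    unfolding expo_def by (subst nn_integral_density) (auto intro!: nn_integral_cong simp: indicator_def)
  also have "\<dots> = (\<integral>\<^sup>+x. ?ed x * indicator {..<c} x * indicator A x \<partial>lborel) + exp (- c * l) * F"
    by (subst nn_integral_add) (auto simp: nn_integral_multc tail)
  also have "\<dots> = (\<integral>\<^sup>+x. ?ed x * indicator {..<c} x * indicator A x + ?ed x * indicator {c..} x * indicator A x \<partial>lborel)"
    by (subst nn_integral_add) (auto simp: tail_A)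
  also have "\<dots> = emeasure (expo l) A"
    by (auto simp: emeasure_expo intro!: nn_integral_cong simp: indicator_def)
  finally show ?thesis unfolding F_def .
qed

definition restart_above :: "real \<Rightarrow> real \<times> real \<Rightarrow> real" where
  "restart_above c = (\<lambda>(x, z). if c \<le> x then c + z else x)"

lemma measurable_restart_above [measurable]:
  "restart_above c \<in> measurable (expo l \<Otimes>\<^sub>M expo l) (expo l)"
  unfolding restart_above_def by measurable

lemma distr_restart_above_expo:
  assumes "0 < l" and "0 \<le> c"
  shows "distr (expo l \<Otimes>\<^sub>M expo l) (expo l) (restart_above c) = expo l"
proof (rule measure_eqI)
  interpret prob_space "expo l"
    using prob_space_expo[OF \<open>0 < l\<close>] .
  fix A assume "A \<in> sets (distr (expo l \<Otimes>\<^sub>M expo l) (expo l) (restart_above c))"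
  then have [measurable]: "A \<in> sets borel" by simp
  have slice: "Pair x -` (restart_above c -` A \<inter> space (expo l \<Otimes>\<^sub>M expo l))
      = (if c \<le> x then {z. c + z \<in> A} else if x \<in> A then UNIV else {})" for x
    by (auto simp: restart_above_def space_pair_measure)
  have "emeasure (distr (expo l \<Otimes>\<^sub>M expo l) (expo l) (restart_above c)) A
      = (\<integral>\<^sup>+x. emeasure (expo l) (Pair x -` (restart_above c -` A \<inter> space (expo l \<Otimes>\<^sub>M expo l))) \<partial>expo l)"
    by (simp add: emeasure_distr del: vimage_Int) (rule emeasure_pair_measure_alt, measurable)
  also have "\<dots> = (\<integral>\<^sup>+x. (if c \<le> x then emeasure (expo l) {z. c + z \<in> A} else indicator A x) \<partial>expo l)"
    using emeasure_space_1 by (intro nn_integral_cong) (simp add: slice indicator_def del: vimage_Int)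
  also have "\<dots> = emeasure (expo l) A"
    using nn_integral_expo_memoryless[OF \<open>0 < l\<close> \<open>0 \<le> c\<close>] by simp
  finally show "emeasure (distr (expo l \<Otimes>\<^sub>M expo l) (expo l) (restart_above c)) A = emeasure (expo l) A" .
qed simp

lemma argmax_idx_cong: "(\<And>i. i \<in> S \<Longrightarrow> u i = w i) \<Longrightarrow> argmax_idx u S = argmax_idx w S"
  unfolding argmax_idx_def by (rule arg_cong[where f = Least]) auto

lemma argmax_idx_subset:
  assumes "T \<subseteq> S" and "t \<in> T" and "\<And>i. i \<in> S - T \<Longrightarrow> u i < u t"
  shows "argmax_idx u S = argmax_idx u T"
  unfolding argmax_idx_def
proof (rule arg_cong[where f = Least], rule ext)
  fix i
  show "(i \<in> S \<and> (\<forall>j\<in>S. u j \<le> u i)) = (i \<in> T \<and> (\<forall>j\<in>T. u j \<le> u i))"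
    using assms by (smt (verit) Diff_iff subsetD)
qed

lemma measurable_argmax_idx:
  fixes v :: "'a \<Rightarrow> nat \<Rightarrow> real"
  assumes "\<And>i. i < k \<Longrightarrow> Measurable.pred M (S i)"
    and "\<And>i. i < k \<Longrightarrow> (\<lambda>x. v x i) \<in> borel_measurable M"
  shows "(\<lambda>x. argmax_idx (v x) {i\<in>{..<k}. S i x}) \<in> measurable M (count_space UNIV)"
  unfolding argmax_idx_def
proof (rule measurable_Least)
  fix i
  have "(\<lambda>x. i \<in> {i\<in>{..<k}. S i x} \<and> (\<forall>j\<in>{i\<in>{..<k}. S i x}. v x j \<le> v x i))
      = (\<lambda>x. i < k \<and> S i x \<and> (\<forall>j<k. S j x \<longrightarrow> v x j \<le> v x i))"
    by auto
  also have "Measurable.pred M \<dots>"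
    using assms by measurable
  finally show "Measurable.pred M (\<lambda>x. i \<in> {i\<in>{..<k}. S i x} \<and> (\<forall>j\<in>{i\<in>{..<k}. S i x}. v x j \<le> v x i))" .
qed

lemma algB_out_eq_rnm_out_restart_above:
  assumes "0 < k" and nonneg: "\<forall>i<k. 0 \<le> X i \<and> 0 \<le> z i"
  shows "algB_out q D \<omega> k (X, z)
       = rnm_out q D \<omega> k (\<lambda>i\<in>{..<k}. restart_above (q_star q D \<omega> k - q D (\<omega> i)) (X i, z i))"
proof -
  define qs where "qs = q_star q D \<omega> k"
  define u where "u i = q D (\<omega> i) + (\<lambda>i\<in>{..<k}. restart_above (qs - q D (\<omega> i)) (X i, z i)) i" for i
  define S' where "S' = {i\<in>{..<k}. min qs (q D (\<omega> i) + X i) = qs}"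
  have fin: "finite ((\<lambda>i. q D (\<omega> i)) ` {..<k})" "(\<lambda>i. q D (\<omega> i)) ` {..<k} \<noteq> {}"
    using \<open>0 < k\<close> by auto
  obtain t where t: "t < k" "q D (\<omega> t) = qs"
    using Max_in[OF fin] unfolding qs_def q_star_def by auto
  have "t \<in> S'"
    using t nonneg by (auto simp: S'_def)
  have u_S': "u i = qs + z i" if "i \<in> S'" for i
    using that by (auto simp: S'_def u_def restart_above_def)
  have u_not_S': "u i < qs" if "i \<in> {..<k} - S'" for i
    using that by (auto simp: S'_def u_def restart_above_def min_def)
  have u_below_t: "u i < u t" if "i \<in> {..<k} - S'" for i
    using u_not_S'[OF that] u_S'[OF \<open>t \<in> S'\<close>] nonneg \<open>t < k\<close> by fastforce
  have "algB_out q D \<omega> k (X, z) = \<omega> (argmax_idx (\<lambda>i. min qs (q D (\<omega> i) + X i) + z i) S')"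
    unfolding algB_out_def Let_def qs_def S'_def by simp
  also have "\<dots> = \<omega> (argmax_idx u S')"
    by (rule arg_cong[where f = \<omega>], rule argmax_idx_cong) (simp add: u_S' S'_def)
  also have "\<dots> = \<omega> (argmax_idx u {..<k})"
    using \<open>t \<in> S'\<close> u_below_t
    by (intro arg_cong[where f = \<omega>] argmax_idx_subset[symmetric]) (auto simp: S'_def)
  also have "\<dots> = rnm_out q D \<omega> k (\<lambda>i\<in>{..<k}. restart_above (q_star q D \<omega> k - q D (\<omega> i)) (X i, z i))"
    unfolding rnm_out_def u_def qs_def ..
  finally show ?thesis .
qed

lemma measurable_expo_vec_component [measurable]:
  "i < k \<Longrightarrow> (\<lambda>x. x i) \<in> borel_measurable (expo_vec k l)"
  unfolding expo_vec_def
  by (subst measurable_cong_sets[OF refl sets_expo[symmetric]]) (rule measurable_component_singleton, simp)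

lemma measurable_rnm_out: "rnm_out q D \<omega> k \<in> measurable (expo_vec k l) (count_space UNIV)"
  using measurable_argmax_idx[of k "\<lambda>_ _. True" "expo_vec k l" "\<lambda>Y i. q D (\<omega> i) + Y i"]
  unfolding rnm_out_def by (simp add: lessThan_def)

lemma measurable_algB_out:
  "algB_out q D \<omega> k \<in> measurable (expo_vec k l \<Otimes>\<^sub>M expo_vec k l) (count_space UNIV)"
  unfolding algB_out_def Let_def by (rule measurable_compose[OF measurable_argmax_idx]) auto

lemma AE_expo_vec_pair_nonneg:
  assumes "0 < l"
  shows "AE Xz in expo_vec k l \<Otimes>\<^sub>M expo_vec k l. \<forall>i<k. 0 \<le> fst Xz i \<and> 0 \<le> snd Xz i"
proof -
  interpret prob_space "expo_vec k l"
    unfolding expo_vec_def by (intro prob_space_PiM prob_space_expo[OF assms])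
  interpret pair_sigma_finite "expo_vec k l" "expo_vec k l" ..
  have "AE x in expo l. 0 \<le> x"
    unfolding expo_def by (subst AE_density) (auto simp: exponential_density_def)
  then have "AE X in expo_vec k l. 0 \<le> X i" if "i < k" for i
    unfolding expo_vec_def using that by (intro AE_PiM_component prob_space_expo[OF assms]) auto
  then have nonneg: "AE X in expo_vec k l. \<forall>i<k. 0 \<le> X i"
    by (subst AE_all_countable) auto
  show ?thesis
  proof (rule AE_pair_measure)
    show "{Xz \<in> space (expo_vec k l \<Otimes>\<^sub>M expo_vec k l). \<forall>i<k. 0 \<le> fst Xz i \<and> 0 \<le> snd Xz i}
        \<in> sets (expo_vec k l \<Otimes>\<^sub>M expo_vec k l)"
      by measurable
    show "AE X in expo_vec k l. AE z in expo_vec k l. \<forall>i<k. 0 \<le> fst (X, z) i \<and> 0 \<le> snd (X, z) i"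
      using nonneg by eventually_elim (use nonneg in \<open>eventually_elim, simp\<close>)
  qed
qed

lemma distr_expo_vec_restart_above:
  assumes "0 < l" and "\<And>i. i < k \<Longrightarrow> 0 \<le> c i"
  shows "distr (expo_vec k l \<Otimes>\<^sub>M expo_vec k l) (expo_vec k l)
           (\<lambda>(X, z). \<lambda>i\<in>{..<k}. restart_above (c i) (X i, z i)) = expo_vec k l"
proof -
  have "distr (expo_vec k l \<Otimes>\<^sub>M expo_vec k l) (expo_vec k l)
          (\<lambda>(X, z). \<lambda>i\<in>{..<k}. restart_above (c i) (X i, z i))
      = (\<Pi>\<^sub>M i\<in>{..<k}. distr (expo l \<Otimes>\<^sub>M expo l) (expo l) (restart_above (c i)))"
    unfolding expo_vec_def by (rule distr_PiM_pair_componentwise) (simp_all add: prob_space_expo assms)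
  also have "\<dots> = expo_vec k l"
    unfolding expo_vec_def by (intro PiM_cong refl) (simp add: distr_restart_above_expo assms)
  finally show ?thesis .
qed

theorem lemma3:
  fixes adj :: "'d \<Rightarrow> 'd \<Rightarrow> bool"
    and q :: "'d \<Rightarrow> 'o \<Rightarrow> real" and D :: 'd
    and \<omega> :: "nat \<Rightarrow> 'o" and k :: nat and \<Delta> \<epsilon> :: real
  assumes "k \<ge> 1"
    and "inj_on \<omega> {..<k}"
    and "\<Delta> > 0"
    and "\<forall>D1 D2 w. adj D1 D2 \<longrightarrow> \<bar>q D1 w - q D2 w\<bar> \<le> \<Delta>"
    and "\<epsilon> > 0"
  shows "intermediate_B q D \<omega> k \<epsilon> \<Delta> = report_noisy_max_expo q D \<omega> k \<epsilon> \<Delta>"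
proof -
  define l where "l = \<epsilon> / (2 * \<Delta>)"
  define c where "c i = q_star q D \<omega> k - q D (\<omega> i)" for i
  define Y where "Y = (\<lambda>(X, z). \<lambda>i\<in>{..<k}. restart_above (c i) (X i, z i))"
  let ?P = "expo_vec k l \<Otimes>\<^sub>M expo_vec k l"
  have "0 < l"
    unfolding l_def using assms by simp
  have "0 \<le> c i" if "i < k" for i
    unfolding c_def q_star_def using that by simp
  then have Y_distr: "distr ?P (expo_vec k l) Y = expo_vec k l"
    unfolding Y_def using distr_expo_vec_restart_above[OF \<open>0 < l\<close>] by blast
  have Y_measurable: "Y \<in> measurable ?P (expo_vec k l)"
    unfolding Y_def expo_vec_def by (rule measurable_PiM_pair_componentwise) simp
  have "AE Xz in ?P. algB_out q D \<omega> k Xz = (rnm_out q D \<omega> k \<circ> Y) Xz"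
    using AE_expo_vec_pair_nonneg[OF \<open>0 < l\<close>]
    by eventually_elim (use \<open>k \<ge> 1\<close> in \<open>auto simp: Y_def c_def algB_out_eq_rnm_out_restart_above\<close>)
  then have "intermediate_B q D \<omega> k \<epsilon> \<Delta> = distr ?P (count_space UNIV) (rnm_out q D \<omega> k \<circ> Y)"
    unfolding intermediate_B_def l_def[symmetric]
    by (intro distr_cong_AE measurable_algB_out measurable_comp[OF Y_measurable measurable_rnm_out]) simp_all
  also have "\<dots> = distr (expo_vec k l) (count_space UNIV) (rnm_out q D \<omega> k)"
    by (simp add: distr_distr[OF measurable_rnm_out Y_measurable, symmetric] Y_distr)
  finally show ?thesis
    unfolding report_noisy_max_expo_def l_def .
qed

end
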